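(* Let $n\geq5$ and $0\leq i\leq 2n-1$, and let $\mathcal{C}_\mu$ be a random maximal chain of $\{0,1,2\}^n$ distributed according to $\mu$. If $x\in L_i$ and $y\in L_{i+1}$ with $x<y$, then \[\mathbb{P}\left(y\in \mathcal{C}_\mu\mid x\in\mathcal{C}_\mu\right) \leq \begin{cases} \dfrac{2|L_i|}{(i+1)|L_{i+1}|} & \text{if }i\leq n-1, \\[2mm] \dfrac{2}{2n-i} & \text{otherwise.}\end{cases}\]
   Context: $\{0,1,2\}^n$ is ordered coordinatewise. $L_i$ is the set of vectors with coordinate sum $i$; $L_i^s$ those elements of $L_i$ with exactly $s$ coordinates equal to $2$; $L_i^{\geq s}=\bigcup_{r\geq s}L_i^r$, $L_i^{\leq s}=\bigcup_{r\leq s}L_i^r$. Define, for $0\le i\le 2n-1$ and $\max\{0,i-n\}\leq s\leq \lfloor (i-1)/2\rfloor$, \[w_{i,s}=\frac{|L_i||L_{i+1}^{\geq s+1}| - |L_{i+1}||L_i^{\geq s+1}|}{|L_i^s||L_i||L_{i+1}|(i-2s)},\] and for $\max\{0,i-n+1\}\leq s\leq \lfloor i/2\rfloor$, \[w_{i,s}'=\frac{|L_i||L_{i+1}^{\leq s}| - |L_{i+1}||L_i^{\leq s-1}|}{|L_i^s||L_i||L_{i+1}|(n-i+s)};\] if $i$ is even set $w_{i,i/2}=0$, and if $i\geq n$ set $w'_{i,i-n}=0$. The distribution $\mu$ is that of the set of states visited by the Markov process that starts at $(0,\dots,0)$ and, for $i=0,\dots,2n-1$, from the current element $x\in L_i^s$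 moves to $y\in L_{i+1}$ with $x<y$ with probability $|L_i|w_{i,s}$ if $y\in L_{i+1}^{s+1}$ and $|L_i|w'_{i,s}$ if $y\in L_{i+1}^{s}$ (these are nonnegative and sum to $1$). *)

theory Defs
  imports Complex_Main
begin

text \<open>Elements of the grid {0,1,2}^n are represented as functions nat => nat that
  vanish outside {0..<n}; the library's pointwise order on functions is the
  coordinatewise order.\<close>

definition cube :: "nat \<Rightarrow> (nat \<Rightarrow> nat) set" where
  "cube n = {x. (\<forall>k<n. x k \<le> 2) \<and> (\<forall>k\<ge>n. x k = 0)}"

definition twos :: "nat \<Rightarrow> (nat \<Rightarrow> nat) \<Rightarrow> nat" where
  "twos n x = card {k. k < n \<and> x k = 2}"

definition lev :: "nat \<Rightarrow> nat \<Rightarrow> (nat \<Rightarrow> nat) set" where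
  "lev n i = {x \<in> cube n. (\<Sum>k<n. x k) = i}"

definition levs :: "nat \<Rightarrow> nat \<Rightarrow> nat \<Rightarrow> (nat \<Rightarrow> nat) set" where
  "levs n i s = {x \<in> lev n i. twos n x = s}"

definition levs_ge :: "nat \<Rightarrow> nat \<Rightarrow> nat \<Rightarrow> (nat \<Rightarrow> nat) set" where
  "levs_ge n i s = {x \<in> lev n i. twos n x \<ge> s}"

definition levs_le :: "nat \<Rightarrow> nat \<Rightarrow> nat \<Rightarrow> (nat \<Rightarrow> nat) set" where
  "levs_le n i s = {x \<in> lev n i. twos n x \<le> s}"

definition wt :: "nat \<Rightarrow> nat \<Rightarrow> nat \<Rightarrow> real" where
  "wt n i s = (if 2 * s = i then 0 else
     (real (card (lev n i)) * real (card (levs_ge n (i+1) (s+1)))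
       - real (card (lev n (i+1))) * real (card (levs_ge n i (s+1))))
     / (real (card (levs n i s)) * real (card (lev n i)) * real (card (lev n (i+1)))
        * (real i - 2 * real s)))"

definition wt' :: "nat \<Rightarrow> nat \<Rightarrow> nat \<Rightarrow> real" where
  "wt' n i s = (if n \<le> i \<and> s = i - n then 0 else
     (real (card (lev n i)) * real (card (levs_le n (i+1) s))
       - real (card (lev n (i+1))) * (if s = 0 then 0 else real (card (levs_le n i (s - 1)))))
     / (real (card (levs n i s)) * real (card (lev n i)) * real (card (lev n (i+1)))
        * (real n - real i + real s)))"

definition trans_prob :: "nat \<Rightarrow> nat \<Rightarrow> (nat \<Rightarrow> nat) \<Rightarrow> (nat \<Rightarrow> nat) \<Rightarrow> real" where
  "trans_prob n i x y =
     (if x \<in> lev n i \<and> y \<in> lev n (i+1) \<and> x < y then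
        (if twos n y = twos n x + 1 then real (card (lev n i)) * wt n i (twos n x)
         else real (card (lev n i)) * wt' n i (twos n x))
      else 0)"

definition max_chains :: "nat \<Rightarrow> (nat \<Rightarrow> nat) list set" where
  "max_chains n = {c. length c = 2 * n + 1 \<and> (\<forall>j\<le>2*n. c ! j \<in> lev n j)
                       \<and> (\<forall>j<2*n. c ! j < c ! (j+1))}"

text \<open>Probability under mu of a maximal chain: probability that the process visits
  exactly this sequence of states (it starts at the zero vector).\<close>
definition mu_chain :: "nat \<Rightarrow> (nat \<Rightarrow> nat) list \<Rightarrow> real" where
  "mu_chain n c = (\<Prod>j<2*n. trans_prob n j (c ! j) (c ! (j+1)))"

definition mu_prob :: "nat \<Rightarrow> ((nat \<Rightarrow> nat) list \<Rightarrow> bool) \<Rightarrow> real" where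
  "mu_prob n P = (\<Sum>c\<in>{c \<in> max_chains n. P c}. mu_chain n c)"

definition mu_cond :: "nat \<Rightarrow> (nat \<Rightarrow> nat) \<Rightarrow> (nat \<Rightarrow> nat) \<Rightarrow> real" where
  "mu_cond n y x = mu_prob n (\<lambda>c. y \<in> set c \<and> x \<in> set c) / mu_prob n (\<lambda>c. x \<in> set c)"

end

theory Submission
  imports Defs "HOL-Analysis.Convex"
begin

text \<open>
  Given that the chain contains \<open>x \<in> L_i\<close>, the process is at \<open>x\<close> after \<open>i\<close> steps, so the
  conditional probability is just the transition probability \<open>|L_i| w_{i,s}\<close> or \<open>|L_i| w'_{i,s}\<close>,
  where \<open>s\<close> is the number of twos of \<open>x\<close>. Counting the covering pairs between \<open>L_i\<close> and
  \<open>L_{i+1}\<close> in two ways links the profiles \<open>r \<mapsto> |L_i^r|\<close> and \<open>r \<mapsto> |L_{i+1}^r|\<close> and splits each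
  numerator into a main term, which gives the bound, and a multiple of a covariance between the
  number of twos and exceeding \<open>s\<close>. Where that covariance enters with the unfavourable sign it is
  bounded by a unimodality argument, whose endpoint estimate is a lower bound on the mean number
  of twos obtained from Cauchy-Schwarz and a second moment identity.
\<close>

lemma concave_quadratic_nonneg_between:
  fixes \<alpha> \<beta> \<gamma> p q x :: real
  assumes "\<alpha> \<le> 0" "p \<le> x" "x \<le> q"
    and "0 \<le> \<alpha> * p\<^sup>2 + \<beta> * p + \<gamma>" "0 \<le> \<alpha> * q\<^sup>2 + \<beta> * q + \<gamma>"
  shows "0 \<le> \<alpha> * x\<^sup>2 + \<beta> * x + \<gamma>"
proof (cases "p = q")
  case True
  then show ?thesis using assms by simp
next
  case False
  then have "0 < q - p" using assms by simp
  have "(q - p) * (\<alpha> * x\<^sup>2 + \<beta> * x + \<gamma>) = (q - x) * (\<alpha> * p\<^sup>2 + \<beta> * p + \<gamma>)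
      + (x - p) * (\<alpha> * q\<^sup>2 + \<beta> * q + \<gamma>) + (- \<alpha>) * ((x - p) * (q - x) * (q - p))"
    by (simp add: algebra_simps power2_eq_square)
  also have "\<dots> \<ge> 0"
    using assms by (intro add_nonneg_nonneg; intro mult_nonneg_nonneg) auto
  finally show ?thesis using \<open>0 < q - p\<close> by (simp add: zero_le_mult_iff)
qed

lemma quadratic_nonpos_imp_ge:
  fixes b c x x\<^sub>0 :: real
  assumes "x\<^sup>2 - b * x + c \<le> 0" "0 \<le> x\<^sub>0\<^sup>2 - b * x\<^sub>0 + c" "2 * x\<^sub>0 \<le> b"
  shows "x\<^sub>0 \<le> x"
proof (rule ccontr)
  assume "\<not> x\<^sub>0 \<le> x"
  then have "(x\<^sub>0 - x) * (x + x\<^sub>0 - b) < 0" using assms(3) by (intro mult_pos_neg) auto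
  moreover have "(x\<^sub>0 - x) * (x + x\<^sub>0 - b) = (x\<^sub>0\<^sup>2 - b * x\<^sub>0 + c) - (x\<^sup>2 - b * x + c)"
    by (simp add: algebra_simps power2_eq_square)
  ultimately show False using assms(1,2) by linarith
qed

lemma weighted_moment_sq_le:
  fixes w :: "nat \<Rightarrow> real"
  assumes "\<And>r. 0 \<le> w r"
  shows "(\<Sum>r\<in>R. real r * w r)\<^sup>2 \<le> (\<Sum>r\<in>R. w r) * (\<Sum>r\<in>R. (real r)\<^sup>2 * w r)"
proof -
  have "(\<Sum>r\<in>R. real r * w r)\<^sup>2 = (\<Sum>r\<in>R. (real r * sqrt (w r)) * sqrt (w r))\<^sup>2"
    using assms by (simp add: mult.assoc)
  also have "\<dots> \<le> (\<Sum>r\<in>R. (real r * sqrt (w r))\<^sup>2) * (\<Sum>r\<in>R. (sqrt (w r))\<^sup>2)"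
    by (rule Cauchy_Schwarz_ineq_sum)
  finally show ?thesis using assms by (simp add: power_mult_distrib mult.commute)
qed

lemma tail_mean_ge_mean:
  fixes w :: "nat \<Rightarrow> real"
  assumes "\<And>r. 0 \<le> w r"
  shows "(\<Sum>r=0..K. real r * w r) * (\<Sum>r=Suc s..K. w r) \<le> (\<Sum>r=0..K. w r) * (\<Sum>r=Suc s..K. real r * w r)"
proof (cases "s < K")
  case False
  then show ?thesis by simp
next
  case True
  define W\<^sub>0 S\<^sub>0 W\<^sub>1 S\<^sub>1 where "W\<^sub>0 = (\<Sum>r=0..s. w r)" and "S\<^sub>0 = (\<Sum>r=0..s. real r * w r)"
    and "W\<^sub>1 = (\<Sum>r=Suc s..K. w r)" and "S\<^sub>1 = (\<Sum>r=Suc s..K. real r * w r)"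
  have split: "{0..K} = {0..s} \<union> {Suc s..K}" "{0..s} \<inter> {Suc s..K} = {}" using True by auto
  have "S\<^sub>0 \<le> real s * W\<^sub>0" unfolding S\<^sub>0_def W\<^sub>0_def sum_distrib_left
    by (rule sum_mono) (simp add: assms mult_right_mono)
  moreover have "(real s + 1) * W\<^sub>1 \<le> S\<^sub>1" unfolding S\<^sub>1_def W\<^sub>1_def sum_distrib_left
    by (rule sum_mono) (simp add: assms mult_right_mono)
  moreover have "0 \<le> W\<^sub>0" "0 \<le> W\<^sub>1" unfolding W\<^sub>0_def W\<^sub>1_def by (simp_all add: sum_nonneg assms)
  ultimately have "S\<^sub>0 * W\<^sub>1 \<le> (real s * W\<^sub>0) * W\<^sub>1" "W\<^sub>0 * ((real s + 1) * W\<^sub>1) \<le> W\<^sub>0 * S\<^sub>1"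
    by (simp_all add: mult_left_mono mult_right_mono)
  moreover have "0 \<le> W\<^sub>0 * W\<^sub>1" using \<open>0 \<le> W\<^sub>0\<close> \<open>0 \<le> W\<^sub>1\<close> by simp
  ultimately have "S\<^sub>0 * W\<^sub>1 \<le> W\<^sub>0 * S\<^sub>1" by (simp add: algebra_simps)
  then have "(S\<^sub>0 + S\<^sub>1) * W\<^sub>1 \<le> (W\<^sub>0 + W\<^sub>1) * S\<^sub>1"
    by (simp add: algebra_simps)
  then show ?thesis
    unfolding W\<^sub>0_def S\<^sub>0_def W\<^sub>1_def S\<^sub>1_def split(1) by (simp add: sum.union_disjoint split(2))
qed

lemma quotient_le_of_scaled_le:
  fixes N D p q c :: real
  assumes "0 < p" "0 < D" "0 < c" "p * N \<le> q * D"
  shows "N / (D * c) \<le> q / (p * c)"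
proof -
  have "N / (D * c) = (p * N) / (p * D * c)" using assms by simp
  also have "\<dots> \<le> (q * D) / (p * D * c)" using assms by (intro divide_right_mono) simp_all
  also have "\<dots> = q / (p * c)" using assms by simp
  finally show ?thesis .
qed

lemma decreasing_on_interval:
  fixes f :: "nat \<Rightarrow> 'a::order"
  assumes "p \<le> q" "\<And>v. p \<le> v \<Longrightarrow> v < q \<Longrightarrow> f (Suc v) \<le> f v"
  shows "f q \<le> f p"
  using assms by (induction q rule: dec_induct) (auto intro: order.trans)

lemma nonneg_if_decrements_change_sign_once:
  fixes \<phi> c k :: "nat \<Rightarrow> real"
  assumes "l \<le> u" "u \<le> r" "0 \<le> \<phi> l" "0 \<le> \<phi> r"
    and decrement: "\<And>v. l \<le> v \<Longrightarrow> v < r \<Longrightarrow> \<phi> v - \<phi> (Suc v) = c v * k v"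
    and c_nonneg: "\<And>v. l \<le> v \<Longrightarrow> v < r \<Longrightarrow> 0 \<le> c v"
    and k_sign: "\<And>p v. l \<le> p \<Longrightarrow> p \<le> v \<Longrightarrow> v < r \<Longrightarrow> 0 \<le> k p \<Longrightarrow> 0 \<le> k v"
  shows "0 \<le> \<phi> u"
proof -
  consider "u = r" | "u < r" "0 \<le> k u" | "u < r" "k u < 0"
    using \<open>u \<le> r\<close> by (cases "u = r"; cases "0 \<le> k u") auto
  then show ?thesis
  proof cases
    case 1
    then show ?thesis using \<open>0 \<le> \<phi> r\<close> by simp
  next
    case 2
    have "\<phi> r \<le> \<phi> u"
    proof (rule decreasing_on_interval)
      fix v assume "u \<le> v" "v < r"
      then have "0 \<le> c v * k v" using 2 \<open>l \<le> u\<close> k_sign[of u v] c_nonneg[of v] by simp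
      then show "\<phi> (Suc v) \<le> \<phi> v" using decrement[of v] \<open>u \<le> v\<close> \<open>v < r\<close> \<open>l \<le> u\<close> by simp
    qed (use 2 in simp)
    then show ?thesis using \<open>0 \<le> \<phi> r\<close> by simp
  next
    case 3
    have "- \<phi> u \<le> - \<phi> l"
    proof (rule decreasing_on_interval)
      fix v assume "l \<le> v" "v < u"
      then have "k v < 0" using k_sign[of v u] 3 by (meson less_imp_le not_less)
      then have "c v * k v \<le> 0" using c_nonneg[of v] \<open>l \<le> v\<close> \<open>v < u\<close> 3
        by (simp add: mult_nonneg_nonpos)
      then show "- \<phi> (Suc v) \<le> - \<phi> v" using decrement[of v] \<open>l \<le> v\<close> \<open>v < u\<close> 3 by simp
    qed (use \<open>l \<le> u\<close> in simp)
    then show ?thesis using \<open>0 \<le> \<phi> l\<close> by simp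
  qed
qed

lemma concave_quadratic_nonneg_upwards:
  fixes k :: "nat \<Rightarrow> real"
  assumes "\<alpha> \<le> 0" "\<And>v. k v = \<alpha> * (real v)\<^sup>2 + \<beta> * real v + \<gamma>"
    and "l + 2 \<le> r \<Longrightarrow> 0 \<le> k (r - 1)"
    and "l \<le> p" "p \<le> v" "v < r" "0 \<le> k p"
  shows "0 \<le> k v"
proof (cases "p = v")
  case False
  then have "0 \<le> k (r - 1)" using assms by simp
  then show ?thesis
    using concave_quadratic_nonneg_between[of \<alpha> "real p" "real v" "real (r - 1)" \<beta> \<gamma>] assms
    by simp
qed (use assms in simp)

section \<open>The distribution of the number of twos on a level\<close>

text \<open>\<open>w r\<close> stands for \<open>|L_m^r|\<close> in \<open>{0,1,2}^n\<close>; sums over \<open>{0..K}\<close> cover its support.\<close>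

locale level_profile =
  fixes n m K :: nat and w :: "nat \<Rightarrow> real"
  assumes cutoff: "m + 1 \<le> 2 * K"
    and nonneg: "\<And>r. 0 \<le> w r"
    and vanish_above: "\<And>r. m < 2 * r \<Longrightarrow> w r = 0"
    and vanish_below: "\<And>r. n + r < m \<Longrightarrow> w r = 0"
    and ratio: "\<And>v. (real v + 1) * (real n - real m + real v + 1) * w (Suc v)
                  = (real m - 2 * real v) * (real m - 2 * real v - 1) * w v"
begin

definition total :: real where "total = (\<Sum>r=0..K. w r)"
definition moment :: real where "moment = (\<Sum>r=0..K. real r * w r)"
definition tail :: "nat \<Rightarrow> real" where "tail s = (\<Sum>r=s..K. w r)"
definition tail_cov :: "nat \<Rightarrow> real" where
  "tail_cov s = total * (\<Sum>r=Suc s..K. real r * w r) - moment * tail (Suc s)"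

lemma vanish_from_cutoff: "K \<le> r \<Longrightarrow> w r = 0"
  using vanish_above[of r] cutoff by simp

lemma total_nonneg: "0 \<le> total"
  unfolding total_def by (simp add: sum_nonneg nonneg)

lemma tail_Suc: "tail s = w s + tail (Suc s)"
proof (cases "s \<le> K")
  case True
  then show ?thesis unfolding tail_def by (simp add: sum.atLeast_Suc_atMost)
qed (simp add: tail_def vanish_from_cutoff)

lemma second_moment_eq:
  "3 * (\<Sum>r=0..K. (real r)\<^sup>2 * w r)
     = (real n + 3 * real m - 2) * moment - real m * (real m - 1) * total"
proof -
  obtain K' where K: "K = Suc K'" using cutoff by (cases K) auto
  have "(\<Sum>v=0..K. real v * (real n - real m + real v) * w v)
      = (\<Sum>v=0..K'. (real v + 1) * (real n - real m + real v + 1) * w (Suc v))"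
    unfolding K by (subst sum.atLeast0_atMost_Suc_shift) (simp add: algebra_simps)
  also have "\<dots> = (\<Sum>v=0..K'. (real m - 2 * real v) * (real m - 2 * real v - 1) * w v)"
    using ratio by simp
  also have "\<dots> = (\<Sum>v=0..K. (real m - 2 * real v) * (real m - 2 * real v - 1) * w v)"
    unfolding K using vanish_from_cutoff[of K] K by simp
  finally have "(\<Sum>v=0..K. real v * (real n - real m + real v) * w v
      - (real m - 2 * real v) * (real m - 2 * real v - 1) * w v) = 0"
    by (simp add: sum_subtractf)
  also have "(\<Sum>v=0..K. real v * (real n - real m + real v) * w v
      - (real m - 2 * real v) * (real m - 2 * real v - 1) * w v)
    = (\<Sum>v=0..K. (real n + 3 * real m - 2) * (real v * w v) - real m * (real m - 1) * w v
      - 3 * ((real v)\<^sup>2 * w v))"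
    by (rule sum.cong) (simp_all add: power2_eq_square algebra_simps)
  finally show ?thesis
    unfolding moment_def total_def by (simp add: sum_subtractf sum_distrib_left)
qed

text \<open>Cauchy-Schwarz and \<open>second_moment_eq\<close> place three times the mean number of twos
  between the roots of this quadratic.\<close>

lemma mean_quadratic_nonpos:
  assumes "0 < total"
  shows "(3 * moment / total)\<^sup>2 - (real n + 3 * real m - 2) * (3 * moment / total)
           + 3 * real m * (real m - 1) \<le> 0"
proof -
  have "moment\<^sup>2 \<le> total * (\<Sum>r=0..K. (real r)\<^sup>2 * w r)"
    unfolding moment_def total_def by (rule weighted_moment_sq_le) (rule nonneg)
  then have "3 * moment\<^sup>2 \<le> total * (3 * (\<Sum>r=0..K. (real r)\<^sup>2 * w r))"
    by simp
  also have "\<dots> = total * ((real n + 3 * real m - 2) * moment - real m * (real m - 1) * total)"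
    using second_moment_eq by simp
  finally have cauchy: "3 * moment\<^sup>2 \<le> total * ((real n + 3 * real m - 2) * moment - real m * (real m - 1) * total)" .
  define \<mu> where "\<mu> = 3 * moment / total"
  have moment: "moment = \<mu> * total / 3" using assms unfolding \<mu>_def by simp
  have "total\<^sup>2 * (\<mu>\<^sup>2 - (real n + 3 * real m - 2) * \<mu> + 3 * real m * (real m - 1))
      = 3 * (3 * moment\<^sup>2 - total * ((real n + 3 * real m - 2) * moment - real m * (real m - 1) * total))"
    unfolding moment by (simp add: algebra_simps power2_eq_square)
  also have "\<dots> \<le> 0" using cauchy by simp
  finally show ?thesis using assms unfolding \<mu>_def[symmetric] by (simp add: mult_le_0_iff)
qed

lemma moment_ge_below_middle:
  assumes "m < n" "0 < total"
  shows "(2 * real m - real n) * total \<le> 3 * moment"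
proof -
  have "2 * real m - real n \<le> 3 * moment / total"
  proof (rule quadratic_nonpos_imp_ge[OF mean_quadratic_nonpos[OF assms(2)]])
    have "(2 * real m - real n)\<^sup>2 - (real n + 3 * real m - 2) * (2 * real m - real n)
        + 3 * real m * (real m - 1) = (2 * real n - real m) * (real n - real m - 1)"
      by (simp add: algebra_simps power2_eq_square)
    moreover have "0 \<le> (2 * real n - real m) * (real n - real m - 1)"
      using assms(1) by (intro mult_nonneg_nonneg) auto
    ultimately show "0 \<le> (2 * real m - real n)\<^sup>2
        - (real n + 3 * real m - 2) * (2 * real m - real n) + 3 * real m * (real m - 1)"
      by (simp only:)
  qed (use assms(1) in simp)
  then show ?thesis using assms(2) by (simp add: field_simps)
qed

lemma moment_ge_above_middle:
  assumes "n < m" "0 < n" "0 < total"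
  shows "real m * total \<le> 3 * moment"
proof -
  have "real m \<le> 3 * moment / total"
  proof (rule quadratic_nonpos_imp_ge[OF mean_quadratic_nonpos[OF assms(3)]])
    have "(real m)\<^sup>2 - (real n + 3 * real m - 2) * real m + 3 * real m * (real m - 1)
        = real m * (real m - real n - 1)"
      by (simp add: algebra_simps power2_eq_square)
    moreover have "0 \<le> real m * (real m - real n - 1)"
      using assms(1) by (intro mult_nonneg_nonneg) auto
    ultimately show "0 \<le> (real m)\<^sup>2 - (real n + 3 * real m - 2) * real m
        + 3 * real m * (real m - 1)"
      by (simp only:)
  qed (use assms(1,2) in simp)
  then show ?thesis using assms(3) by (simp add: field_simps)
qed

lemma tail_cov_nonneg: "0 \<le> tail_cov s"
  using tail_mean_ge_mean[of w K s] nonneg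
  unfolding tail_cov_def total_def moment_def tail_def by simp

lemma tail_cov_Suc: "tail_cov v = tail_cov (Suc v) + w (Suc v) * (total * (real v + 1) - moment)"
proof (cases "Suc v \<le> K")
  case True
  then have "(\<Sum>r=Suc v..K. real r * w r) = (real v + 1) * w (Suc v) + (\<Sum>r=Suc (Suc v)..K. real r * w r)"
    by (simp add: sum.atLeast_Suc_atMost)
  then show ?thesis unfolding tail_cov_def tail_Suc[of "Suc v"] by (simp add: algebra_simps)
next
  case False
  then show ?thesis using vanish_from_cutoff[of "Suc v"] unfolding tail_cov_def tail_def by simp
qed

lemma tail_cov_eq_0_above: "(\<And>r. t < r \<Longrightarrow> w r = 0) \<Longrightarrow> tail_cov t = 0"
  unfolding tail_cov_def tail_def by simp

lemma tail_cov_eq_0_below: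
  assumes "\<And>r. r \<le> t \<Longrightarrow> w r = 0"
  shows "tail_cov t = 0"
proof (cases "t \<le> K")
  case True
  have split: "{0..K} = {0..t} \<union> {Suc t..K}" using True by auto
  have "moment = (\<Sum>r=Suc t..K. real r * w r)" "total = tail (Suc t)"
    unfolding moment_def total_def tail_def split using assms
    by (simp_all add: sum.union_disjoint)
  then show ?thesis unfolding tail_cov_def by simp
qed (simp add: tail_cov_def tail_def)

lemma tail_cov_0: "tail_cov 0 = moment * w 0"
proof -
  have "moment = (\<Sum>r=1..K. real r * w r)"
    unfolding moment_def using cutoff by (simp add: sum.atLeast_Suc_atMost)
  moreover have "total = w 0 + tail 1" unfolding total_def tail_def using cutoff
    by (simp add: sum.atLeast_Suc_atMost)
  ultimately show ?thesis unfolding tail_cov_def by (simp add: algebra_simps)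
qed

lemma total_pos: "0 < w s \<Longrightarrow> 0 < total"
  using member_le_sum[of s "{0..K}" w] nonneg vanish_from_cutoff[of s]
  unfolding total_def by (cases "s \<le> K") force+

lemma total_eq_head_tail: "s \<le> Suc K \<Longrightarrow> total = (\<Sum>r=0..<s. w r) + tail s"
  unfolding total_def tail_def atLeastLessThanSuc_atLeastAtMost[symmetric]
  using sum.atLeastLessThan_concat[of 0 s "Suc K" w] by simp

lemma tail_eq_total:
  assumes "\<And>r. r < s \<Longrightarrow> w r = 0"
  shows "tail s = total"
proof (cases "s \<le> Suc K")
  case True
  then show ?thesis using total_eq_head_tail[OF True] assms by simp
next
  case False
  then have "w r = 0" for r using assms vanish_from_cutoff[of r] by (cases "r < s") auto
  then show ?thesis unfolding tail_def total_def by simp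
qed

text \<open>Each of the two bounds on \<open>tail_cov\<close> below states that a gap function is nonnegative. It is
  so at both ends of its range, and its decrements change sign at most once, having the sign of a
  concave quadratic that is nonnegative at the end of the range.\<close>

definition low_gap :: "nat \<Rightarrow> real" where
  "low_gap v = w v * (total * (real n - real m - 2 * real v) + 3 * moment) - 3 * tail_cov v"

definition low_slope :: "nat \<Rightarrow> real" where
  "low_slope v = (real v + 1) * (total * (real n - real m - 2 * real v) + 3 * moment)
      - total * (real m - 2 * real v) * (real m - 2 * real v - 1)"

lemma low_gap_decrement: "low_gap v - low_gap (Suc v) = w v / (real v + 1) * low_slope v"
proof -
  have "low_gap v - low_gap (Suc v) = w v * (total * (real n - real m - 2 * real v) + 3 * moment)
      - total * ((real v + 1) * (real n - real m + real v + 1) * w (Suc v)) / (real v + 1)"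
    unfolding low_gap_def tail_cov_Suc[of v] by (simp add: field_simps)
  also have "\<dots> = w v / (real v + 1) * low_slope v"
    unfolding ratio low_slope_def by (simp add: field_simps)
  finally show ?thesis .
qed

lemma low_slope_nonneg_upwards:
  assumes "m < n" "0 < total" "p \<le> v" "v < m div 2" "0 \<le> low_slope p"
  shows "0 \<le> low_slope v"
proof (rule concave_quadratic_nonneg_upwards[where \<alpha> = "- 6 * total"
      and \<beta> = "total * (real n + 3 * real m - 4) + 3 * moment"
      and \<gamma> = "total * (real n - real m) + 3 * moment - total * real m * (real m - 1)"])
  show "low_slope u = - 6 * total * (real u)\<^sup>2 + (total * (real n + 3 * real m - 4) + 3 * moment) * real u
      + (total * (real n - real m) + 3 * moment - total * real m * (real m - 1))" for u
    unfolding low_slope_def by (simp add: power2_eq_square algebra_simps)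
  define top where "top = m div 2"
  have mean: "0 \<le> total * (real n - 2 * real m) + 3 * moment"
    using moment_ge_below_middle[OF assms(1,2)] by (simp add: algebra_simps)
  show "0 \<le> low_slope (m div 2 - 1)" if "0 + 2 \<le> m div 2"
  proof -
    have t1: "real (top - 1) = real top - 1" using that unfolding top_def by simp
    consider "m = 2 * top" | "m = 2 * top + 1" unfolding top_def by linarith
    then show ?thesis
    proof cases
      case 1
      have "low_slope (top - 1) = real top * (total * (real n - 2 * real m) + 3 * moment)
          + 2 * total * (real top - 1)"
        unfolding low_slope_def t1 1[THEN arg_cong[of _ _ real]] by (simp add: algebra_simps)
      then show ?thesis using mean assms that unfolding top_def by simp
    next
      case 2
      have "low_slope (top - 1) = real top * (total * (real n - 2 * real m) + 3 * moment)
          + 3 * total * (real top - 2)"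
        unfolding low_slope_def t1 2[THEN arg_cong[of _ _ real]] by (simp add: algebra_simps)
      then show ?thesis using mean assms that unfolding top_def by simp
    qed
  qed
qed (use assms in simp_all)

lemma tail_cov_le_below_middle:
  assumes "m < n" "0 < total" "2 * s \<le> m"
  shows "3 * tail_cov s \<le> w s * (total * (real n - real m - 2 * real s) + 3 * moment)"
proof -
  have "0 \<le> low_gap s"
  proof (rule nonneg_if_decrements_change_sign_once[where l = 0 and r = "m div 2" and k = low_slope])
    show "low_gap v - low_gap (Suc v) = w v / (real v + 1) * low_slope v" for v
      by (rule low_gap_decrement)
    show "0 \<le> low_slope v" if "0 \<le> p" "p \<le> v" "v < m div 2" "0 \<le> low_slope p" for p v
      using low_slope_nonneg_upwards assms that by blast
    have "0 \<le> w 0 * (total * (real n - real m))" using assms nonneg[of 0] by simp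
    then show "0 \<le> low_gap 0" unfolding low_gap_def tail_cov_0 by (simp add: algebra_simps)
    have "tail_cov (m div 2) = 0" by (rule tail_cov_eq_0_above) (use vanish_above in simp)
    moreover have "total * (real n - 2 * real m) \<le> total * (real n - real m - 2 * real (m div 2))"
      using assms by (intro mult_left_mono) auto
    then have "0 \<le> total * (real n - real m - 2 * real (m div 2)) + 3 * moment"
      using moment_ge_below_middle[OF assms(1,2)] by (simp add: algebra_simps)
    ultimately show "0 \<le> low_gap (m div 2)" unfolding low_gap_def using nonneg[of "m div 2"] by simp
  qed (use assms nonneg in auto)
  then show ?thesis unfolding low_gap_def by simp
qed

definition high_gap :: "nat \<Rightarrow> real" where
  "high_gap v = total * (real v + 1) * w (Suc v) - 3 * tail_cov v"

definition high_slope :: "nat \<Rightarrow> real" where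
  "high_slope v = (real n - real m + real v + 2) * (3 * moment - 2 * total * (real v + 1))
      - total * (real m - 2 * real v - 2) * (real m - 2 * real v - 3)"

lemma high_gap_decrement:
  assumes "m \<le> n + v + 1"
  shows "high_gap v - high_gap (Suc v) = w (Suc v) / (real n - real m + real v + 2) * high_slope v"
proof -
  have pos: "0 < real n - real m + real v + 2" using assms by simp
  have ratio_Suc: "(real v + 2) * (real n - real m + real v + 2) * w (Suc (Suc v))
      = (real m - 2 * real v - 2) * (real m - 2 * real v - 3) * w (Suc v)"
    using ratio[of "Suc v"] by (simp add: algebra_simps)
  have "high_gap v - high_gap (Suc v) = w (Suc v) * (3 * moment - 2 * total * (real v + 1))
      - total * ((real v + 2) * (real n - real m + real v + 2) * w (Suc (Suc v)))
        / (real n - real m + real v + 2)"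
    unfolding high_gap_def tail_cov_Suc[of v] using pos by (simp add: field_simps)
  also have "\<dots> = w (Suc v) / (real n - real m + real v + 2) * high_slope v"
    unfolding ratio_Suc high_slope_def using pos by (simp add: field_simps)
  finally show ?thesis .
qed

lemma high_slope_nonneg_upwards:
  assumes "n < m" "0 < n" "0 < total" "m - 1 - n \<le> p" "p \<le> v" "v < (m - 2) div 2" "0 \<le> high_slope p"
  shows "0 \<le> high_slope v"
proof (rule concave_quadratic_nonneg_upwards[where \<alpha> = "- 6 * total"
      and \<beta> = "3 * moment - 2 * total * (real n - real m + 2) - 2 * total + total * (4 * real m - 10)"
      and \<gamma> = "(real n - real m + 2) * (3 * moment - 2 * total) - total * (real m - 2) * (real m - 3)"])
  show "high_slope u = - 6 * total * (real u)\<^sup>2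
      + (3 * moment - 2 * total * (real n - real m + 2) - 2 * total + total * (4 * real m - 10)) * real u
      + ((real n - real m + 2) * (3 * moment - 2 * total) - total * (real m - 2) * (real m - 3))" for u
    unfolding high_slope_def by (simp add: power2_eq_square algebra_simps)
  define top where "top = (m - 2) div 2"
  have mean: "real m * total \<le> 3 * moment" using moment_ge_above_middle assms by simp
  show "0 \<le> high_slope ((m - 2) div 2 - 1)" if "m - 1 - n + 2 \<le> (m - 2) div 2"
  proof -
    have t1: "real (top - 1) = real top - 1" using that unfolding top_def by simp
    have "2 * top + 2 \<le> m" "m \<le> 2 * top + 3" using assms unfolding top_def by auto
    then consider "m = 2 * top + 2" | "m = 2 * top + 3" by linarith
    then show ?thesis
    proof cases
      case 1
      have "high_slope (top - 1) = (real n - real top - 1) * (3 * moment - 2 * total * real top - 2 * total)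
          + 2 * total * (real n - real top - 2)"
        unfolding high_slope_def t1 1[THEN arg_cong[of _ _ real]] by (simp add: algebra_simps)
      moreover have "real top + 2 \<le> real n" using that 1 unfolding top_def by simp
      moreover have "0 \<le> 3 * moment - 2 * total * real top - 2 * total"
        using mean 1 by (simp add: algebra_simps)
      ultimately show ?thesis using assms unfolding top_def by simp
    next
      case 2
      have "high_slope (top - 1) = (real n - real top - 2) * (3 * moment - 2 * total * real top - 3 * total)
          + 3 * total * (real n - real top - 4)"
        unfolding high_slope_def t1 2[THEN arg_cong[of _ _ real]] by (simp add: algebra_simps)
      moreover have "real top + 4 \<le> real n" using that 2 unfolding top_def by simp
      moreover have "0 \<le> 3 * moment - 2 * total * real top - 3 * total"
        using mean 2 by (simp add: algebra_simps)
      ultimately show ?thesis using assms unfolding top_def by simp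
    qed
  qed
qed (use assms in simp_all)

lemma tail_cov_le_above_middle:
  assumes "n < m" "0 < n" "0 < total" "m \<le> n + s + 1" "2 * s + 1 < m"
  shows "3 * tail_cov s \<le> total * (real s + 1) * w (Suc s)"
proof -
  have "0 \<le> high_gap s"
  proof (rule nonneg_if_decrements_change_sign_once[where l = "m - 1 - n" and r = "(m - 2) div 2" and k = high_slope])
    show "high_gap v - high_gap (Suc v) = w (Suc v) / (real n - real m + real v + 2) * high_slope v"
      if "m - 1 - n \<le> v" for v
      using high_gap_decrement that by simp
    show "0 \<le> high_slope v"
      if "m - 1 - n \<le> p" "p \<le> v" "v < (m - 2) div 2" "0 \<le> high_slope p" for p v
      using high_slope_nonneg_upwards assms that by blast
    have "tail_cov (m - 1 - n) = 0" by (rule tail_cov_eq_0_below) (use vanish_below assms in simp)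
    then show "0 \<le> high_gap (m - 1 - n)" unfolding high_gap_def using nonneg total_nonneg by simp
    have "tail_cov (Suc ((m - 2) div 2)) = 0" by (rule tail_cov_eq_0_above) (use vanish_above in simp)
    moreover have "2 * ((m - 2) div 2) + 2 \<le> m" using assms by auto
    then have "(2 * real ((m - 2) div 2) + 2) * total \<le> real m * total"
      using total_nonneg by (intro mult_right_mono) auto
    then have "0 \<le> 3 * moment - 2 * total * (real ((m - 2) div 2) + 1)"
      using moment_ge_above_middle[OF assms(1-3)] by (simp add: algebra_simps)
    moreover have "high_gap ((m - 2) div 2) = w (Suc ((m - 2) div 2))
        * (3 * moment - 2 * total * (real ((m - 2) div 2) + 1)) - 3 * tail_cov (Suc ((m - 2) div 2))"
      unfolding high_gap_def tail_cov_Suc[of "(m - 2) div 2"] by (simp add: algebra_simps)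
    ultimately show "0 \<le> high_gap ((m - 2) div 2)" using nonneg[of "Suc ((m - 2) div 2)"] by simp
  qed (use assms nonneg in auto)
  then show ?thesis unfolding high_gap_def by simp
qed

end

section \<open>Two adjacent levels\<close>

text \<open>\<open>a\<close> and \<open>b\<close> are the profiles of \<open>L_i\<close> and \<open>L_{i+1}\<close>; \<open>raise_weight\<close> and \<open>fill_weight\<close> below
  are \<open>w_{i,s}\<close> and \<open>w'_{i,s}\<close> (see \<open>wt_eq\<close> and \<open>wt'_eq\<close>).\<close>

locale adjacent_profiles =
  fixes n i K :: nat and a b :: "nat \<Rightarrow> real"
  assumes cutoff: "i + 2 \<le> 2 * K"
    and a_nonneg: "\<And>r. 0 \<le> a r" and b_nonneg: "\<And>r. 0 \<le> b r"
    and a_vanish_above: "\<And>r. i < 2 * r \<Longrightarrow> a r = 0"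
    and a_vanish_below: "\<And>r. n + r < i \<Longrightarrow> a r = 0"
    and b_vanish_above: "\<And>r. i + 1 < 2 * r \<Longrightarrow> b r = 0"
    and b_vanish_below: "\<And>r. n + r < i + 1 \<Longrightarrow> b r = 0"
    and raise_count: "\<And>s. a s * (real i - 2 * real s) = (real s + 1) * b (Suc s)"
    and fill_count: "\<And>s. a s * (real n - real i + real s) = (real i + 1 - 2 * real s) * b s"
begin

sublocale a: level_profile n i K a
proof
  fix v
  have "(real v + 1) * (real n - real i + real v + 1) * a (Suc v)
      = (real v + 1) * (a (Suc v) * (real n - real i + real (Suc v)))"
    by (simp add: algebra_simps)
  also have "\<dots> = (real v + 1) * ((real i + 1 - 2 * real (Suc v)) * b (Suc v))"
    by (simp only: fill_count)
  also have "\<dots> = (real i - 2 * real v - 1) * ((real v + 1) * b (Suc v))"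
    by (simp add: algebra_simps)
  also have "\<dots> = (real i - 2 * real v - 1) * (a v * (real i - 2 * real v))"
    by (simp only: raise_count)
  finally show "(real v + 1) * (real n - real i + real v + 1) * a (Suc v)
      = (real i - 2 * real v) * (real i - 2 * real v - 1) * a v"
    by (simp add: algebra_simps)
qed (use cutoff a_nonneg a_vanish_above a_vanish_below in auto)

sublocale b: level_profile n "i + 1" K b
proof
  fix v
  have "(real v + 1) * (real n - real (i + 1) + real v + 1) * b (Suc v)
      = (real n - real i + real v) * ((real v + 1) * b (Suc v))"
    by (simp add: algebra_simps)
  also have "\<dots> = (real n - real i + real v) * (a v * (real i - 2 * real v))"
    by (simp only: raise_count)
  also have "\<dots> = (real i - 2 * real v) * (a v * (real n - real i + real v))"
    by (simp add: algebra_simps)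
  also have "\<dots> = (real i - 2 * real v) * ((real i + 1 - 2 * real v) * b v)"
    by (simp only: fill_count)
  finally show "(real v + 1) * (real n - real (i + 1) + real v + 1) * b (Suc v)
      = (real (i + 1) - 2 * real v) * (real (i + 1) - 2 * real v - 1) * b v"
    by (simp add: algebra_simps)
qed (use cutoff b_nonneg b_vanish_above b_vanish_below in auto)

definition tail_excess :: "nat \<Rightarrow> real" where
  "tail_excess s = a.total * b.tail (Suc s) - b.total * a.tail (Suc s)"

definition raise_weight :: "nat \<Rightarrow> real" where
  "raise_weight s = (if 2 * s = i then 0
     else tail_excess s / (a s * a.total * b.total * (real i - 2 * real s)))"

definition fill_weight :: "nat \<Rightarrow> real" where
  "fill_weight s = (if n \<le> i \<and> s = i - n then 0
     else (b.total * a s - tail_excess s) / (a s * a.total * b.total * (real n - real i + real s)))"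

definition transition_bound :: real where
  "transition_bound = (if i \<le> n - 1 then 2 * a.total / (real (i + 1) * b.total)
                       else 2 / (2 * real n - real i))"

lemma combined_count:
  "(2 * real n - real i) * a s = 2 * (real i + 1 - 2 * real s) * b s + (real s + 1) * b (Suc s)"
  using raise_count[of s] fill_count[of s] by (simp add: algebra_simps)

lemma b_tail_eq:
  "(real i + 1) * b.tail (Suc s)
     = (\<Sum>r=Suc s..K. a r * (real n + real i - 3 * real r)) + 2 * a s * (real i - 2 * real s)"
proof -
  have partial: "(real i + 1) * (\<Sum>r=Suc s..t. b r)
      = (\<Sum>r=Suc s..t. a r * (real n + real i - 3 * real r))
        + 2 * a s * (real i - 2 * real s) - 2 * a t * (real i - 2 * real t)" if "s \<le> t" for t
    using that
  proof (induction t rule: dec_induct)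
    case (step t)
    have "(real i + 1) * b (Suc t) = a (Suc t) * (real n + real i - 3 * real (Suc t))
        + 2 * a t * (real i - 2 * real t) - 2 * a (Suc t) * (real i - 2 * real (Suc t))"
      using raise_count[of t] fill_count[of "Suc t"] by (simp add: algebra_simps)
    then show ?case using step by (simp add: algebra_simps)
  qed simp
  show ?thesis
  proof (cases "s \<le> K")
    case True
    then show ?thesis using partial[of K] a.vanish_from_cutoff[of K] unfolding b.tail_def by simp
  qed (simp add: b.tail_def a.vanish_from_cutoff)
qed

lemma b_total_eq: "(real i + 1) * b.total = (real n + real i) * a.total - 3 * a.moment"
proof -
  have "b.total = b 0 + b.tail 1" unfolding b.total_def b.tail_def using cutoff
    by (simp add: sum.atLeast_Suc_atMost)
  moreover have "(\<Sum>r=0..K. a r * (real n + real i - 3 * real r))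
      = a 0 * (real n + real i) + (\<Sum>r=1..K. a r * (real n + real i - 3 * real r))"
    using cutoff by (simp add: sum.atLeast_Suc_atMost)
  moreover have "(\<Sum>r=0..K. a r * (real n + real i - 3 * real r)) = (real n + real i) * a.total - 3 * a.moment"
    unfolding a.total_def a.moment_def
    by (simp add: algebra_simps sum_subtractf sum_distrib_left sum_distrib_right)
  ultimately show ?thesis using b_tail_eq[of 0] fill_count[of 0] by (simp add: algebra_simps)
qed

lemma a_tail_eq:
  "(2 * real n - real i) * a.tail s = (\<Sum>r=s..K. b r * (2 * real i + 2 - 3 * real r)) - real s * b s"
proof -
  have partial: "(2 * real n - real i) * (\<Sum>r=s..t. a r)
      = (\<Sum>r=s..t. b r * (2 * real i + 2 - 3 * real r)) - real s * b s + (real t + 1) * b (Suc t)"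
    if "s \<le> t" for t
    using that
  proof (induction t rule: dec_induct)
    case base
    then show ?case using combined_count[of s] by (simp add: algebra_simps)
  next
    case (step t)
    then show ?case using combined_count[of "Suc t"] by (simp add: algebra_simps)
  qed
  show ?thesis
  proof (cases "s \<le> K")
    case True
    then show ?thesis using partial[of K] b.vanish_from_cutoff[of "Suc K"] unfolding a.tail_def by simp
  qed (simp add: a.tail_def b.vanish_from_cutoff)
qed

lemma a_total_eq: "(2 * real n - real i) * a.total = 2 * (real i + 1) * b.total - 3 * b.moment"
  using a_tail_eq[of 0] unfolding a.tail_def[symmetric] b.total_def b.moment_def
  by (simp add: a.tail_def a.total_def algebra_simps sum_subtractf sum_distrib_left sum_distrib_right
      sum.distrib)

lemma tail_excess_eq_below:
  "(real i + 1) * tail_excess s = 2 * a.total * a s * (real i - 2 * real s) - 3 * a.tail_cov s"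
proof -
  have "(\<Sum>r=Suc s..K. a r * (real n + real i - 3 * real r))
      = (real n + real i) * a.tail (Suc s) - 3 * (\<Sum>r=Suc s..K. real r * a r)"
    unfolding a.tail_def by (simp add: algebra_simps sum_subtractf sum_distrib_left sum_distrib_right)
  then have "(real i + 1) * b.tail (Suc s) = (real n + real i) * a.tail (Suc s)
      - 3 * (\<Sum>r=Suc s..K. real r * a r) + 2 * a s * (real i - 2 * real s)"
    using b_tail_eq[of s] by simp
  note b_tail = this
  have "(real i + 1) * tail_excess s
      = a.total * ((real i + 1) * b.tail (Suc s)) - ((real i + 1) * b.total) * a.tail (Suc s)"
    unfolding tail_excess_def by (simp add: algebra_simps)
  also have "\<dots> = a.total * ((real n + real i) * a.tail (Suc s)
      - 3 * (\<Sum>r=Suc s..K. real r * a r) + 2 * a s * (real i - 2 * real s))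
      - ((real n + real i) * a.total - 3 * a.moment) * a.tail (Suc s)"
    unfolding b_tail b_total_eq ..
  also have "\<dots> = 2 * a.total * a s * (real i - 2 * real s) - 3 * a.tail_cov s"
    unfolding a.tail_cov_def by (simp add: algebra_simps)
  finally show ?thesis .
qed

lemma tail_excess_eq_above:
  "(2 * real n - real i) * tail_excess s = 3 * b.tail_cov s + b.total * (real s + 1) * b (Suc s)"
proof -
  have "(\<Sum>r=Suc s..K. b r * (2 * real i + 2 - 3 * real r))
      = 2 * (real i + 1) * b.tail (Suc s) - 3 * (\<Sum>r=Suc s..K. real r * b r)"
    unfolding b.tail_def
    by (simp add: algebra_simps sum_subtractf sum_distrib_left sum_distrib_right sum.distrib)
  then have "(2 * real n - real i) * a.tail (Suc s) = 2 * (real i + 1) * b.tail (Suc s)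
      - 3 * (\<Sum>r=Suc s..K. real r * b r) - (real s + 1) * b (Suc s)"
    using a_tail_eq[of "Suc s"] by simp
  note a_tail = this
  have "(2 * real n - real i) * tail_excess s
      = ((2 * real n - real i) * a.total) * b.tail (Suc s)
        - b.total * ((2 * real n - real i) * a.tail (Suc s))"
    unfolding tail_excess_def by (simp add: algebra_simps)
  also have "\<dots> = (2 * (real i + 1) * b.total - 3 * b.moment) * b.tail (Suc s)
        - b.total * (2 * (real i + 1) * b.tail (Suc s) - 3 * (\<Sum>r=Suc s..K. real r * b r)
        - (real s + 1) * b (Suc s))"
    unfolding a_tail a_total_eq ..
  also have "\<dots> = 3 * b.tail_cov s + b.total * (real s + 1) * b (Suc s)"
    unfolding b.tail_cov_def by (simp add: algebra_simps)
  finally show ?thesis .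
qed

lemma support_of_pos:
  assumes "0 < a s"
  shows "2 * s \<le> i" "i \<le> n + s"
  using a_vanish_above[of s] a_vanish_below[of s] assms by (auto simp: not_less[symmetric])

lemma transition_bound_nonneg:
  assumes "0 < b.total" "i < 2 * n"
  shows "0 \<le> transition_bound"
  unfolding transition_bound_def using assms a.total_nonneg by auto

lemma raise_weight_le:
  assumes "0 < a s" "0 < b.total" "0 < n" "i < 2 * n"
  shows "a.total * raise_weight s \<le> transition_bound"
proof (cases "2 * s = i")
  case True
  then show ?thesis unfolding raise_weight_def using transition_bound_nonneg assms by simp
next
  case False
  define d where "d = real i - 2 * real s"
  have "0 < d" using False support_of_pos[OF assms(1)] unfolding d_def by simp
  have "0 < a.total" using a.total_pos[OF assms(1)] .
  have weight: "a.total * raise_weight s = tail_excess s / ((a s * d) * b.total)"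
    unfolding raise_weight_def d_def[symmetric] using False \<open>0 < a.total\<close> by (simp add: ac_simps)
  show ?thesis
  proof (cases "i \<le> n - 1")
    case True
    have "real (i + 1) * tail_excess s \<le> 2 * a.total * (a s * d)"
      using tail_excess_eq_below[of s] a.tail_cov_nonneg[of s] unfolding d_def by (simp add: algebra_simps)
    then have "tail_excess s / ((a s * d) * b.total) \<le> 2 * a.total / (real (i + 1) * b.total)"
      by (intro quotient_le_of_scaled_le) (use assms \<open>0 < d\<close> in simp_all)
    then show ?thesis unfolding weight transition_bound_def using True by simp
  next
    case False
    have "3 * b.tail_cov s \<le> b.total * (real s + 1) * b (Suc s)"
      using b.tail_cov_le_above_middle[of s] False assms support_of_pos[OF assms(1)] \<open>2 * s \<noteq> i\<close>
      by simp
    then have "(2 * real n - real i) * tail_excess s \<le> 2 * b.total * (a s * d)"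
      using tail_excess_eq_above[of s] raise_count[of s] unfolding d_def by (simp add: algebra_simps)
    then have "tail_excess s / ((a s * d) * b.total) \<le> 2 * b.total / ((2 * real n - real i) * b.total)"
      by (intro quotient_le_of_scaled_le) (use assms \<open>0 < d\<close> in simp_all)
    then show ?thesis unfolding weight transition_bound_def using False assms by simp
  qed
qed

lemma fill_weight_le:
  assumes "0 < a s" "0 < b.total" "0 < n" "i < 2 * n"
  shows "a.total * fill_weight s \<le> transition_bound"
proof (cases "n \<le> i \<and> s = i - n")
  case True
  then show ?thesis unfolding fill_weight_def using transition_bound_nonneg assms by simp
next
  case False
  define d where "d = real n - real i + real s"
  have "0 < d" using False support_of_pos[OF assms(1)] unfolding d_def by auto
  have "0 < a.total" using a.total_pos[OF assms(1)] .
  have weight: "a.total * fill_weight s = (b.total * a s - tail_excess s) / ((a s * d) * b.total)"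
    unfolding fill_weight_def if_not_P[OF False] d_def[symmetric] using \<open>0 < a.total\<close>
    by (simp add: ac_simps)
  show ?thesis
  proof (cases "i \<le> n - 1")
    case True
    have "3 * a.tail_cov s \<le> a s * (a.total * (real n - real i - 2 * real s) + 3 * a.moment)"
      using a.tail_cov_le_below_middle[of s] True assms support_of_pos[OF assms(1)] \<open>0 < a.total\<close>
      by simp
    moreover have "(real i + 1) * (b.total * a s - tail_excess s)
        = a s * ((real i + 1) * b.total) - (real i + 1) * tail_excess s"
      by (simp add: algebra_simps)
    ultimately have "real (i + 1) * (b.total * a s - tail_excess s) \<le> 2 * a.total * (a s * d)"
      unfolding b_total_eq tail_excess_eq_below d_def by (simp add: algebra_simps)
    then have "(b.total * a s - tail_excess s) / ((a s * d) * b.total) \<le> 2 * a.total / (real (i + 1) * b.total)"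
      by (intro quotient_le_of_scaled_le) (use assms \<open>0 < d\<close> in simp_all)
    then show ?thesis unfolding weight transition_bound_def using True by simp
  next
    case False
    have "(2 * real n - real i) * (b.total * a s - tail_excess s)
        = b.total * ((2 * real n - real i) * a s) - (2 * real n - real i) * tail_excess s"
      by (simp add: algebra_simps)
    also have "\<dots> = 2 * b.total * ((real i + 1 - 2 * real s) * b s) - 3 * b.tail_cov s"
      unfolding combined_count tail_excess_eq_above by (simp add: algebra_simps)
    also have "\<dots> \<le> 2 * b.total * (a s * d)"
      unfolding d_def fill_count using b.tail_cov_nonneg[of s] by simp
    finally have "(2 * real n - real i) * (b.total * a s - tail_excess s) \<le> 2 * b.total * (a s * d)" .
    then have "(b.total * a s - tail_excess s) / ((a s * d) * b.total)
        \<le> 2 * b.total / ((2 * real n - real i) * b.total)"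
      by (intro quotient_le_of_scaled_le) (use assms \<open>0 < d\<close> in simp_all)
    then show ?thesis unfolding weight transition_bound_def using False assms by simp
  qed
qed

lemma weights_sum:
  assumes "0 < a s" "0 < b.total"
  shows "a.total * (raise_weight s * (real i - 2 * real s) + fill_weight s * (real n - real i + real s)) = 1"
proof -
  have "0 < a.total" using a.total_pos[OF assms(1)] .
  have raise: "a.total * (raise_weight s * (real i - 2 * real s)) = tail_excess s / (a s * b.total)"
  proof (cases "2 * s = i")
    case True
    have "b.tail (Suc s) = 0" "a.tail (Suc s) = 0"
      unfolding a.tail_def b.tail_def using True a_vanish_above b_vanish_above by auto
    then show ?thesis unfolding raise_weight_def tail_excess_def using True by simp
  next
    case False
    then show ?thesis unfolding raise_weight_def using \<open>0 < a.total\<close> assms by (simp add: field_simps)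
  qed
  have fill: "a.total * (fill_weight s * (real n - real i + real s)) = (b.total * a s - tail_excess s) / (a s * b.total)"
  proof (cases "n \<le> i \<and> s = i - n")
    case True
    have "b.tail (Suc s) = b.total"
    proof (rule b.tail_eq_total)
      fix r assume "r < Suc s"
      then show "b r = 0" using True by (intro b_vanish_below) linarith
    qed
    moreover have "a.tail s = a.total" by (rule a.tail_eq_total) (use True a_vanish_below in simp)
    ultimately show ?thesis unfolding fill_weight_def tail_excess_def using True a.tail_Suc[of s]
      by (simp add: algebra_simps)
  next
    case False
    define d where "d = real n - real i + real s"
    have "d \<noteq> 0" using False support_of_pos[OF assms(1)] unfolding d_def by auto
    then show ?thesis unfolding fill_weight_def if_not_P[OF False] d_def[symmetric]
      using \<open>0 < a.total\<close> assms by (simp add: field_simps)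
  qed
  have "a.total * (raise_weight s * (real i - 2 * real s) + fill_weight s * (real n - real i + real s))
      = tail_excess s / (a s * b.total) + (b.total * a s - tail_excess s) / (a s * b.total)"
    unfolding raise[symmetric] fill[symmetric] by (rule distrib_left)
  then show ?thesis using assms by (simp add: field_simps)
qed

end

section \<open>Counting the levels of the grid\<close>

lemma cube_Suc_iff: "y \<in> cube (Suc n) \<longleftrightarrow> y(n := 0) \<in> cube n \<and> y n \<le> 2"
  unfolding cube_def by (auto simp: less_Suc_eq)

lemma cube_outside: "x \<in> cube n \<Longrightarrow> n \<le> k \<Longrightarrow> x k = 0"
  unfolding cube_def by simp

lemma finite_cube: "finite (cube n)"
proof (induction n)
  case 0
  have "cube 0 = {\<lambda>_. 0}" unfolding cube_def by auto
  then show ?case by simp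
next
  case (Suc n)
  have "cube (Suc n) \<subseteq> (\<lambda>(x, v). x(n := v)) ` (cube n \<times> {..2})"
  proof
    fix y assume "y \<in> cube (Suc n)"
    then have "(y(n := 0), y n) \<in> cube n \<times> {..2}" using cube_Suc_iff by auto
    then show "y \<in> (\<lambda>(x, v). x(n := v)) ` (cube n \<times> {..2})"
      by (rule image_eqI[rotated]) simp
  qed
  then show ?case by (rule finite_subset) (use Suc in simp)
qed

lemma finite_lev: "finite (lev n i)"
  unfolding lev_def using finite_cube by simp

lemma finite_levs: "finite (levs n i s)"
  unfolding levs_def using finite_lev by simp

lemma lev_unique: "x \<in> lev n j \<Longrightarrow> x \<in> lev n j' \<Longrightarrow> j = j'"
  unfolding lev_def by auto

lemma twos_le: "twos n y \<le> n"
  unfolding twos_def by (rule order.trans[OF card_mono[of "{..<n}"]]) auto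

lemma twos_upd_outside: "twos n (y(n := v)) = twos n y"
  unfolding twos_def by (metis (mono_tags) fun_upd_other less_irrefl_nat)

lemma twos_Suc: "twos (Suc n) y = twos n y + (if y n = 2 then 1 else 0)"
proof -
  have "{k. k < Suc n \<and> y k = 2} = {k. k < n \<and> y k = 2} \<union> (if y n = 2 then {n} else {})"
    by (auto simp: less_Suc_eq)
  then show ?thesis unfolding twos_def by (auto simp: card_insert_if)
qed

definition last_fibre :: "nat \<Rightarrow> nat \<Rightarrow> nat \<Rightarrow> nat \<Rightarrow> (nat \<Rightarrow> nat) set" where
  "last_fibre n i s v = {y \<in> levs (Suc n) i s. y n = v}"

lemma card_last_fibre:
  assumes "v \<le> 2"
  shows "card (last_fibre n i s v) = (if v \<le> i \<and> of_bool (v = 2) \<le> s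
           then card (levs n (i - v) (s - of_bool (v = 2))) else 0)"
proof -
  define t where "t = (of_bool (v = 2) :: nat)"
  have mem: "y \<in> last_fibre n i s v \<longleftrightarrow> y(n := 0) \<in> cube n \<and> y n = v
      \<and> (\<Sum>k<n. (y(n := 0)) k) + v = i \<and> twos n (y(n := 0)) + t = s" for y
  proof -
    have "(\<Sum>k<n. (y(n := 0)) k) = (\<Sum>k<n. y k)" by (rule sum.cong) auto
    then show ?thesis unfolding last_fibre_def levs_def lev_def t_def using assms
      by (auto simp: cube_Suc_iff twos_upd_outside twos_Suc)
  qed
  show ?thesis
  proof (cases "v \<le> i \<and> t \<le> s")
    case True
    have "bij_betw (\<lambda>y. y(n := 0)) (last_fibre n i s v) (levs n (i - v) (s - t))"
    proof (rule bij_betw_byWitness[where f' = "\<lambda>x. x(n := v)"])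
      show "\<forall>y\<in>last_fibre n i s v. y(n := 0, n := v) = y" using mem by auto
      show "\<forall>x\<in>levs n (i - v) (s - t). x(n := v, n := 0) = x"
        unfolding levs_def lev_def using cube_outside by fastforce
      show "(\<lambda>y. y(n := 0)) ` last_fibre n i s v \<subseteq> levs n (i - v) (s - t)"
        using mem unfolding levs_def lev_def by auto
      show "(\<lambda>x. x(n := v)) ` levs n (i - v) (s - t) \<subseteq> last_fibre n i s v"
      proof
        fix y assume "y \<in> (\<lambda>x. x(n := v)) ` levs n (i - v) (s - t)"
        then obtain x where x: "x \<in> levs n (i - v) (s - t)" "y = x(n := v)" by auto
        have "x n = 0" using x cube_outside unfolding levs_def lev_def by auto
        then have "y(n := 0) = x" using x by auto
        then show "y \<in> last_fibre n i s v" using mem[of y] x True unfolding levs_def lev_def by auto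
      qed
    qed
    then show ?thesis using True bij_betw_same_card t_def by fastforce
  next
    case False
    then have "last_fibre n i s v = {}" using mem by fastforce
    then show ?thesis using False by (auto simp: t_def)
  qed
qed

lemma card_levs_Suc:
  "card (levs (Suc n) i s) = card (last_fibre n i s 0) + card (last_fibre n i s 1) + card (last_fibre n i s 2)"
proof -
  have levs: "levs (Suc n) i s = (last_fibre n i s 0 \<union> last_fibre n i s 1) \<union> last_fibre n i s 2"
    unfolding last_fibre_def levs_def lev_def using cube_Suc_iff by fastforce
  have fin: "finite (last_fibre n i s v)" for v unfolding last_fibre_def using finite_levs by simp
  have "card (last_fibre n i s 0 \<union> last_fibre n i s 1) = card (last_fibre n i s 0) + card (last_fibre n i s 1)"
    by (rule card_Un_disjoint) (use fin in \<open>auto simp: last_fibre_def\<close>)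
  moreover have "card ((last_fibre n i s 0 \<union> last_fibre n i s 1) \<union> last_fibre n i s 2)
      = card (last_fibre n i s 0 \<union> last_fibre n i s 1) + card (last_fibre n i s 2)"
    by (rule card_Un_disjoint) (use fin in \<open>auto simp: last_fibre_def\<close>)
  ultimately show ?thesis unfolding levs by simp
qed

text \<open>Integer indices make the recursion over the last coordinate uniform: the counts
  vanish at negative indices.\<close>

definition level_count :: "nat \<Rightarrow> int \<Rightarrow> int \<Rightarrow> real" where
  "level_count n i s = (if i < 0 \<or> s < 0 then 0 else real (card (levs n (nat i) (nat s))))"

lemma level_count_nat: "level_count n (int j) (int r) = real (card (levs n j r))"
  unfolding level_count_def by simp

lemma level_count_0: "level_count 0 i s = of_bool (i = 0 \<and> s = 0)"
proof -
  have "cube 0 = {\<lambda>_. 0}" unfolding cube_def by auto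
  then have "levs 0 i' s' = (if i' = 0 \<and> s' = 0 then {\<lambda>_. 0} else {})" for i' s'
    unfolding levs_def lev_def twos_def by auto
  then show ?thesis unfolding level_count_def by auto
qed

lemma level_count_Suc:
  "level_count (Suc n) i s = level_count n i s + level_count n (i - 1) s + level_count n (i - 2) (s - 1)"
proof (cases "i < 0 \<or> s < 0")
  case True
  then show ?thesis unfolding level_count_def by auto
next
  case False
  then have "0 \<le> i" "0 \<le> s" by auto
  have "real (card (last_fibre n (nat i) (nat s) 1)) = level_count n (i - 1) s"
    using card_last_fibre[of 1 n "nat i" "nat s"] False
    unfolding level_count_def by (auto simp: nat_diff_distrib)
  moreover have "real (card (last_fibre n (nat i) (nat s) 2)) = level_count n (i - 2) (s - 1)"
    using card_last_fibre[of 2 n "nat i" "nat s"] False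
    unfolding level_count_def by (auto simp: nat_diff_distrib)
  ultimately show ?thesis
    using card_levs_Suc[of n "nat i" "nat s"] card_last_fibre[of 0 n "nat i" "nat s"] False
    unfolding level_count_def by simp
qed

lemma level_count_vanish_above: "i < 2 * s \<Longrightarrow> level_count n i s = 0"
  by (induction n arbitrary: i s) (simp_all add: level_count_0 level_count_Suc)

lemma level_count_vanish_below: "int n + s < i \<Longrightarrow> level_count n i s = 0"
  by (induction n arbitrary: i s) (auto simp: level_count_0 level_count_Suc)

text \<open>Both identities double count the pairs \<open>x < y\<close> with \<open>x \<in> L_i^s\<close>: the first those
  raising a coordinate from 1 to 2, the second those raising a coordinate from 0 to 1.\<close>

lemma level_count_raise:
  "level_count n i s * (of_int i - 2 * of_int s) = (of_int s + 1) * level_count n (i + 1) (s + 1)"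
proof (induction n arbitrary: i s)
  case (Suc n)
  show ?case
    using Suc[of i s] Suc[of "i - 1" s] Suc[of "i - 2" "s - 1"]
    by (simp add: level_count_Suc algebra_simps)
qed (auto simp: level_count_0)

lemma level_count_fill:
  "level_count n i s * (real n - of_int i + of_int s) = (of_int i + 1 - 2 * of_int s) * level_count n (i + 1) s"
proof (induction n arbitrary: i s)
  case (Suc n)
  show ?case
    using Suc[of i s] Suc[of "i - 1" s] Suc[of "i - 2" "s - 1"]
    by (simp add: level_count_Suc algebra_simps)
qed (auto simp: level_count_0)

section \<open>One step of the process\<close>

definition twos_profile :: "nat \<Rightarrow> nat \<Rightarrow> nat \<Rightarrow> real" where
  "twos_profile n j r = real (card (levs n j r))"

lemma card_lev_filter:
  assumes "finite R"
  shows "card {x \<in> lev n j. twos n x \<in> R} = (\<Sum>r\<in>R. card (levs n j r))"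
proof -
  have "{x \<in> lev n j. twos n x \<in> R} = (\<Union>r\<in>R. levs n j r)" unfolding levs_def by auto
  moreover have "card (\<Union>r\<in>R. levs n j r) = (\<Sum>r\<in>R. card (levs n j r))"
    by (rule card_UN_disjoint) (use assms finite_levs in \<open>auto simp: levs_def\<close>)
  ultimately show ?thesis by simp
qed

lemma card_lev_eq_sum: "real (card (lev n j)) = (\<Sum>r=0..n+1. twos_profile n j r)"
proof -
  have "lev n j = {x \<in> lev n j. twos n x \<in> {0..n+1}}" using twos_le by (auto simp: le_SucI)
  then show ?thesis using card_lev_filter[of "{0..n+1}" n j] by (simp add: twos_profile_def)
qed

lemma card_levs_ge_eq_sum: "real (card (levs_ge n j s)) = (\<Sum>r=s..n+1. twos_profile n j r)"
proof -
  have "levs_ge n j s = {x \<in> lev n j. twos n x \<in> {s..n+1}}"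
    unfolding levs_ge_def using twos_le by (auto simp: le_SucI)
  then show ?thesis using card_lev_filter[of "{s..n+1}" n j] by (simp add: twos_profile_def)
qed

lemma card_levs_le_eq_sum: "real (card (levs_le n j s)) = (\<Sum>r=0..s. twos_profile n j r)"
proof -
  have "levs_le n j s = {x \<in> lev n j. twos n x \<in> {0..s}}" unfolding levs_le_def by auto
  then show ?thesis using card_lev_filter[of "{0..s}" n j] by (simp add: twos_profile_def)
qed

lemma covers_iff:
  assumes "z \<in> lev n j"
  shows "y \<in> lev n (j + 1) \<and> z < y \<longleftrightarrow> (\<exists>k<n. z k < 2 \<and> y = z(k := z k + 1))"
proof
  assume H: "y \<in> lev n (j + 1) \<and> z < y"
  have z: "z \<in> cube n" "(\<Sum>k<n. z k) = j" and y: "y \<in> cube n" "(\<Sum>k<n. y k) = j + 1"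
    using assms H unfolding lev_def by auto
  have le: "z k \<le> y k" for k using H by (simp add: less_fun_def le_fun_def)
  have "(\<Sum>k<n. y k - z k) = 1" using le z y by (simp add: sum_subtractf_nat)
  then obtain k where k: "k < n" "y k - z k = 1" and others: "\<forall>k'<n. k' \<noteq> k \<longrightarrow> y k' - z k' = 0"
    using sum_eq_1_iff[of "{..<n}" "\<lambda>k. y k - z k"] by auto
  have "y = z(k := z k + 1)"
  proof
    fix k'
    show "y k' = (z(k := z k + 1)) k'"
      using k others le[of k'] cube_outside[OF y(1), of k'] cube_outside[OF z(1), of k']
      by (cases "k' < n"; cases "k' = k") auto
  qed
  moreover have "z k < 2" using y k le[of k] unfolding cube_def by force
  ultimately show "\<exists>k<n. z k < 2 \<and> y = z(k := z k + 1)" using k by auto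
next
  assume "\<exists>k<n. z k < 2 \<and> y = z(k := z k + 1)"
  then obtain k where k: "k < n" "z k < 2" "y = z(k := z k + 1)" by auto
  have z: "z \<in> cube n" "(\<Sum>k<n. z k) = j" using assms unfolding lev_def by auto
  have "(\<Sum>k'<n. y k') = (\<Sum>k'<n. z k' + of_bool (k' = k))" unfolding k(3) by (intro sum.cong) auto
  then have "(\<Sum>k'<n. y k') = j + 1" using k z by (simp add: sum.distrib)
  moreover have "y \<in> cube n" using z k unfolding cube_def by auto
  moreover have "z < y" unfolding k(3) by (simp add: less_fun_def le_fun_def)
  ultimately show "y \<in> lev n (j + 1) \<and> z < y" unfolding lev_def by simp
qed

lemma twos_raise:
  assumes "k < n" "z k < 2"
  shows "twos n (z(k := z k + 1)) = twos n z + of_bool (z k = 1)"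
proof -
  have "{k'. k' < n \<and> (z(k := z k + 1)) k' = 2}
      = (if z k = 1 then insert k {k'. k' < n \<and> z k' = 2} else {k'. k' < n \<and> z k' = 2})"
    using assms by auto
  moreover have "k \<notin> {k'. k' < n \<and> z k' = 2}" using assms by auto
  ultimately show ?thesis unfolding twos_def by simp
qed

lemma coordinate_counts:
  assumes "z \<in> lev n j"
  shows "real (card {k. k < n \<and> z k = 1}) = real j - 2 * real (twos n z)"
    and "real (card {k. k < n \<and> z k = 0}) = real n - real j + real (twos n z)"
proof -
  have z: "z \<in> cube n" "(\<Sum>k<n. z k) = j" using assms unfolding lev_def by auto
  have le2: "z k \<le> 2" if "k < n" for k using z that unfolding cube_def by auto
  have digit: "real (z k) = of_bool (z k = 1) + 2 * of_bool (z k = 2)" if "k < n" for k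
    using le2[OF that] by (cases "z k"; cases "z k - 1"; auto)
  have "real j = (\<Sum>k<n. real (z k))" using z(2) of_nat_sum[of z "{..<n}"] by simp
  also have "\<dots> = (\<Sum>k<n. of_bool (z k = 1)) + 2 * (\<Sum>k<n. of_bool (z k = 2))"
    using digit by (simp add: sum.distrib sum_distrib_left)
  also have "\<dots> = real (card {k. k < n \<and> z k = 1}) + 2 * real (twos n z)"
    unfolding twos_def by (simp add: Int_def lessThan_def)
  finally have ones: "real j = real (card {k. k < n \<and> z k = 1}) + 2 * real (twos n z)" .
  have "(1::real) = of_bool (z k = 0) + of_bool (z k = 1) + of_bool (z k = 2)" if "k < n" for k
    using le2[OF that] by (cases "z k"; cases "z k - 1"; auto)
  then have "real n = (\<Sum>k<n. of_bool (z k = 0) + of_bool (z k = 1) + of_bool (z k = 2))"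
    by (simp add: sum.cong)
  then have "real n = real (card {k. k < n \<and> z k = 0}) + real (card {k. k < n \<and> z k = 1}) + real (twos n z)"
    unfolding twos_def by (simp add: sum.distrib Int_def lessThan_def)
  then show "real (card {k. k < n \<and> z k = 1}) = real j - 2 * real (twos n z)"
    and "real (card {k. k < n \<and> z k = 0}) = real n - real j + real (twos n z)"
    using ones by simp_all
qed

locale level_step =
  fixes n j :: nat
  assumes below_top: "j < 2 * n"

sublocale level_step \<subseteq> adjacent_profiles n j "n + 1" "twos_profile n j" "twos_profile n (j + 1)"
proof
  have int_Suc: "int j + 1 = int (j + 1)" "int s + 1 = int (Suc s)" for s by simp_all
  fix r s
  show "j + 2 \<le> 2 * (n + 1)" using below_top by simp
  show "0 \<le> twos_profile n j r" "0 \<le> twos_profile n (j + 1) r" by (simp_all add: twos_profile_def)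
  show "j < 2 * r \<Longrightarrow> twos_profile n j r = 0"
    using level_count_vanish_above[of "int j" "int r" n]
    unfolding level_count_nat twos_profile_def by simp
  show "j + 1 < 2 * r \<Longrightarrow> twos_profile n (j + 1) r = 0"
    using level_count_vanish_above[of "int (j + 1)" "int r" n]
    unfolding level_count_nat twos_profile_def by simp
  show "n + r < j \<Longrightarrow> twos_profile n j r = 0"
    using level_count_vanish_below[of n "int r" "int j"]
    unfolding level_count_nat twos_profile_def by simp
  show "n + r < j + 1 \<Longrightarrow> twos_profile n (j + 1) r = 0"
    using level_count_vanish_below[of n "int r" "int (j + 1)"]
    unfolding level_count_nat twos_profile_def by simp
  show "twos_profile n j s * (real j - 2 * real s) = (real s + 1) * twos_profile n (j + 1) (Suc s)"
    using level_count_raise[of n "int j" "int s", unfolded int_Suc level_count_nat]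
    unfolding twos_profile_def by simp
  show "twos_profile n j s * (real n - real j + real s) = (real j + 1 - 2 * real s) * twos_profile n (j + 1) s"
    using level_count_fill[of n "int j" "int s", unfolded int_Suc level_count_nat]
    unfolding twos_profile_def by simp
qed

context level_step
begin

lemma totals_eq_card: "a.total = real (card (lev n j))" "b.total = real (card (lev n (j + 1)))"
  unfolding a.total_def b.total_def by (simp_all only: card_lev_eq_sum)

lemma profile_pos: "x \<in> lev n j \<Longrightarrow> 0 < twos_profile n j (twos n x)"
  unfolding twos_profile_def levs_def using finite_lev by (auto simp: card_gt_0_iff)

lemma twos_bound: "x \<in> lev n j \<Longrightarrow> 2 * twos n x \<le> j"
  using support_of_pos(1)[OF profile_pos] .

lemma b_total_pos:
  assumes "x \<in> lev n j"
  shows "0 < b.total"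
proof -
  obtain k where "k < n" "x k \<noteq> 2"
  proof -
    have "\<not> (\<forall>k<n. x k = 2)"
    proof
      assume "\<forall>k<n. x k = 2"
      then have "(\<Sum>k<n. x k) = 2 * n" by simp
      then show False using assms below_top unfolding lev_def by simp
    qed
    then show thesis using that by blast
  qed
  moreover have "x k \<le> 2" using assms \<open>k < n\<close> unfolding lev_def cube_def by auto
  ultimately have "x(k := x k + 1) \<in> lev n (j + 1)" using covers_iff[OF assms] by fastforce
  then show ?thesis unfolding totals_eq_card using finite_lev by (auto simp: card_gt_0_iff)
qed

lemma wt_eq: "wt n j s = raise_weight s"
  unfolding wt_def raise_weight_def tail_excess_def totals_eq_card a.tail_def b.tail_def
  by (simp only: card_levs_ge_eq_sum Suc_eq_plus1 flip: twos_profile_def)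

lemma wt'_eq:
  assumes "2 * s \<le> j"
  shows "wt' n j s = fill_weight s"
proof -
  have "s \<le> n + 1" using assms below_top by simp
  have b_head: "real (card (levs_le n (j + 1) s)) = b.total - b.tail (Suc s)"
    using b.total_eq_head_tail[of "Suc s"] \<open>s \<le> n + 1\<close>
    by (simp add: card_levs_le_eq_sum atLeastLessThanSuc_atLeastAtMost)
  have a_head: "(if s = 0 then 0 else real (card (levs_le n j (s - 1)))) = a.total - a.tail s"
    using a.total_eq_head_tail[of s] \<open>s \<le> n + 1\<close>
    by (cases s) (simp_all add: card_levs_le_eq_sum atLeastLessThanSuc_atLeastAtMost)
  have numerator: "a.total * (b.total - b.tail (Suc s)) - b.total * (a.total - a.tail s)
      = b.total * twos_profile n j s - tail_excess s"
    unfolding tail_excess_def a.tail_Suc[of s] by (simp add: algebra_simps)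
  show ?thesis
    unfolding wt'_def fill_weight_def totals_eq_card[symmetric] b_head a_head numerator
    by (simp add: twos_profile_def)
qed

lemma trans_prob_eq:
  assumes "x \<in> lev n j"
  shows "trans_prob n j x y = (if y \<in> lev n (j + 1) \<and> x < y
      then a.total * (if twos n y = twos n x + 1 then raise_weight (twos n x) else fill_weight (twos n x))
      else 0)"
  unfolding trans_prob_def wt_eq wt'_eq[OF twos_bound[OF assms]] totals_eq_card using assms by simp

lemma trans_prob_le:
  assumes "0 < n" "x \<in> lev n j"
  shows "trans_prob n j x y \<le> transition_bound"
  using raise_weight_le[OF profile_pos b_total_pos] fill_weight_le[OF profile_pos b_total_pos]
    transition_bound_nonneg[OF b_total_pos] assms below_top
  unfolding trans_prob_eq[OF assms(2)] by auto

lemma trans_prob_sum: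
  assumes "z \<in> lev n j"
  shows "(\<Sum>y\<in>lev n (j + 1). trans_prob n j z y) = 1"
proof -
  define s where "s = twos n z"
  define raise where "raise k = z(k := z k + 1)" for k
  define raisable where "raisable = {k. k < n \<and> z k < 2}"
  have covers: "{y \<in> lev n (j + 1). z < y} = raise ` raisable"
    unfolding raisable_def raise_def using covers_iff[OF assms] by auto
  have "inj_on raise raisable"
  proof (rule inj_onI)
    fix k k' assume "raise k = raise k'"
    then have "raise k k = raise k' k" by simp
    then show "k = k'" unfolding raise_def by (cases "k = k'") auto
  qed
  have "(\<Sum>y\<in>lev n (j + 1). trans_prob n j z y) = (\<Sum>y\<in>{y \<in> lev n (j + 1). z < y}. trans_prob n j z y)"
    by (rule sum.mono_neutral_right) (auto simp: finite_lev trans_prob_def)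
  also have "\<dots> = (\<Sum>k\<in>raisable. trans_prob n j z (raise k))"
    unfolding covers by (rule sum.reindex[OF \<open>inj_on raise raisable\<close>, unfolded comp_def])
  also have "\<dots> = (\<Sum>k\<in>raisable. a.total * (if z k = 1 then raise_weight s else fill_weight s))"
  proof (rule sum.cong)
    fix k assume "k \<in> raisable"
    then have "raise k \<in> lev n (j + 1) \<and> z < raise k" "twos n (raise k) = s + of_bool (z k = 1)"
      using covers_iff[OF assms] twos_raise unfolding raisable_def raise_def s_def by auto
    then show "trans_prob n j z (raise k) = a.total * (if z k = 1 then raise_weight s else fill_weight s)"
      unfolding trans_prob_eq[OF assms] s_def by auto
  qed simp
  also have "\<dots> = a.total * (raise_weight s * real (card {k. k < n \<and> z k = 1})
      + fill_weight s * real (card {k. k < n \<and> z k = 0}))"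
  proof -
    have "raisable = {k. k < n \<and> z k = 1} \<union> {k. k < n \<and> z k = 0}" unfolding raisable_def by auto
    then show ?thesis by (simp add: sum.union_disjoint sum_distrib_left algebra_simps Int_def)
  qed
  also have "\<dots> = 1"
    unfolding coordinate_counts[OF assms] s_def[symmetric]
    using weights_sum[OF profile_pos[OF assms] b_total_pos[OF assms]] by (simp add: s_def)
  finally show ?thesis .
qed

end

section \<open>Maximal chains as paths of the process\<close>

text \<open>Paths visit consecutive levels but need not increase; the others have weight zero, since
  \<open>trans_prob\<close> vanishes outside covering pairs.\<close>

definition level_paths :: "nat \<Rightarrow> nat \<Rightarrow> nat \<Rightarrow> (nat \<Rightarrow> nat) list set" where
  "level_paths n l k = {c. length c = Suc k \<and> (\<forall>j<length c. c ! j \<in> lev n (l + j))}"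

definition path_weight :: "nat \<Rightarrow> nat \<Rightarrow> (nat \<Rightarrow> nat) list \<Rightarrow> real" where
  "path_weight n l c = (\<Prod>j<length c - 1. trans_prob n (l + j) (c ! j) (c ! Suc j))"

lemma level_paths_0: "level_paths n l 0 = (\<lambda>y. [y]) ` lev n l"
  unfolding level_paths_def by (auto simp: length_Suc_conv)

lemma level_paths_Suc: "level_paths n l (Suc k) = (\<lambda>(y, q). y # q) ` (lev n l \<times> level_paths n (Suc l) k)"
proof -
  have "c \<in> level_paths n l (Suc k) \<longleftrightarrow> (\<exists>y q. c = y # q \<and> y \<in> lev n l \<and> q \<in> level_paths n (Suc l) k)" for c
    by (cases c) (auto simp: level_paths_def All_less_Suc2)
  then show ?thesis by auto
qed

lemma finite_level_paths: "finite (level_paths n l k)"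
  by (induction k arbitrary: l) (simp_all add: level_paths_0 level_paths_Suc finite_lev)

lemma head_in_lev: "q \<in> level_paths n l k \<Longrightarrow> q ! 0 \<in> lev n l"
  unfolding level_paths_def by force

lemma sum_level_paths_Suc:
  "(\<Sum>c\<in>level_paths n l (Suc k). g c) = (\<Sum>y\<in>lev n l. \<Sum>q\<in>level_paths n (Suc l) k. g (y # q))"
proof -
  have "inj_on (\<lambda>(y, q). y # q) (lev n l \<times> level_paths n (Suc l) k)" by (auto simp: inj_on_def)
  then show ?thesis
    unfolding level_paths_Suc sum.cartesian_product by (simp add: sum.reindex case_prod_unfold)
qed

lemma path_weight_single: "path_weight n l [x] = 1"
  by (simp add: path_weight_def)

lemma path_weight_Cons:
  assumes "q \<in> level_paths n (Suc l) k"
  shows "path_weight n l (y # q) = trans_prob n l y (q ! 0) * path_weight n (Suc l) q"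
proof -
  have "length q = Suc k" using assms unfolding level_paths_def by simp
  then show ?thesis unfolding path_weight_def by (simp add: prod.lessThan_Suc_shift del: prod.lessThan_Suc)
qed

lemma sum_level_paths_by_head:
  "(\<Sum>q\<in>level_paths n l k. g (q ! 0) * path_weight n l q)
     = (\<Sum>y\<in>lev n l. g y * (\<Sum>q\<in>level_paths n l k. if q ! 0 = y then path_weight n l q else 0))"
proof -
  have "(\<Sum>q\<in>level_paths n l k. g (q ! 0) * path_weight n l q)
      = (\<Sum>q\<in>level_paths n l k. \<Sum>y\<in>lev n l. if q ! 0 = y then g y * path_weight n l q else 0)"
    by (rule sum.cong) (auto simp: head_in_lev finite_lev)
  also have "\<dots> = (\<Sum>y\<in>lev n l. g y * (\<Sum>q\<in>level_paths n l k. if q ! 0 = y then path_weight n l q else 0))"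
    by (subst sum.swap) (auto simp: sum_distrib_left intro!: sum.cong)
  finally show ?thesis .
qed

lemma sum_path_weight_from:
  assumes "y \<in> lev n l" "l + k \<le> 2 * n"
  shows "(\<Sum>c\<in>level_paths n l k. if c ! 0 = y then path_weight n l c else 0) = 1"
  using assms
proof (induction k arbitrary: l y)
  case 0
  have "inj_on (\<lambda>y. [y]) (lev n l)" by (simp add: inj_on_def)
  then show ?case using 0 finite_lev unfolding level_paths_0 by (simp add: sum.reindex path_weight_single)
next
  case (Suc k)
  have "(\<Sum>c\<in>level_paths n l (Suc k). if c ! 0 = y then path_weight n l c else 0)
      = (\<Sum>y'\<in>lev n l. if y' = y then (\<Sum>q\<in>level_paths n (Suc l) k. path_weight n l (y' # q)) else 0)"
    unfolding sum_level_paths_Suc by (rule sum.cong) auto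
  also have "\<dots> = (\<Sum>q\<in>level_paths n (Suc l) k. path_weight n l (y # q))"
    using Suc.prems finite_lev by simp
  also have "\<dots> = (\<Sum>q\<in>level_paths n (Suc l) k. trans_prob n l y (q ! 0) * path_weight n (Suc l) q)"
    by (rule sum.cong) (simp_all add: path_weight_Cons)
  also have "\<dots> = (\<Sum>y'\<in>lev n (Suc l). trans_prob n l y y')"
    unfolding sum_level_paths_by_head using Suc by simp
  also have "\<dots> = 1" using level_step.trans_prob_sum[of n l y] Suc.prems by (simp add: level_step_def)
  finally show ?case .
qed

lemma sum_path_weight_after_step:
  assumes "l + Suc k \<le> 2 * n"
  shows "(\<Sum>q\<in>level_paths n (Suc l) k. g (q ! 0) * path_weight n (Suc l) q) = (\<Sum>y\<in>lev n (Suc l). g y)"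
  unfolding sum_level_paths_by_head using sum_path_weight_from assms by simp

lemma sum_swap_weighted:
  fixes \<phi> :: "'a \<Rightarrow> real"
  assumes "finite A" "finite Q"
  shows "(\<Sum>z\<in>A. \<Sum>q\<in>Q. \<phi> z * (if P q then t z q * w q else 0))
       = (\<Sum>q\<in>Q. (\<Sum>z\<in>A. \<phi> z * t z q) * (if P q then w q else 0))"
  by (subst sum.swap) (auto simp: sum_distrib_right mult.assoc intro!: sum.cong)

lemma sum_path_weight_first_step:
  assumes "x \<in> lev n l" "l + Suc k \<le> 2 * n"
  shows "(\<Sum>c\<in>level_paths n l (Suc k). \<phi> (c ! 0) * (if c ! 0 = x \<and> c ! Suc 0 = y then path_weight n l c else 0))
       = \<phi> x * trans_prob n l x y"
proof -
  have "(\<Sum>c\<in>level_paths n l (Suc k). \<phi> (c ! 0) * (if c ! 0 = x \<and> c ! Suc 0 = y then path_weight n l c else 0))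
      = (\<Sum>z\<in>lev n l. if z = x then \<phi> x * (\<Sum>q\<in>level_paths n (Suc l) k.
          (if q ! 0 = y then trans_prob n l x (q ! 0) else 0) * path_weight n (Suc l) q) else 0)"
    unfolding sum_level_paths_Suc
    by (intro sum.cong refl) (auto simp: path_weight_Cons sum_distrib_left intro!: sum.cong)
  also have "\<dots> = \<phi> x * (\<Sum>y'\<in>lev n (Suc l). if y' = y then trans_prob n l x y' else 0)"
    using sum_path_weight_after_step[OF assms(2), of "\<lambda>y'. if y' = y then trans_prob n l x y' else 0"]
      assms(1) finite_lev
    by simp
  also have "\<dots> = \<phi> x * trans_prob n l x y"
    using finite_lev by (simp add: trans_prob_def)
  finally show ?thesis .
qed

lemma sum_path_weight_start:
  assumes "x \<in> lev n l" "l + Suc k \<le> 2 * n"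
  shows "(\<Sum>c\<in>level_paths n l (Suc k). \<phi> (c ! 0) * (if c ! 0 = x then path_weight n l c else 0)) = \<phi> x"
proof -
  have "(\<Sum>c\<in>level_paths n l (Suc k). \<phi> (c ! 0) * (if c ! 0 = x then path_weight n l c else 0))
      = (\<Sum>z\<in>lev n l. if z = x then \<phi> x * (\<Sum>q\<in>level_paths n (Suc l) k.
          trans_prob n l x (q ! 0) * path_weight n (Suc l) q) else 0)"
    unfolding sum_level_paths_Suc
    by (intro sum.cong refl) (auto simp: path_weight_Cons sum_distrib_left intro!: sum.cong)
  also have "\<dots> = \<phi> x"
    unfolding sum_path_weight_after_step[OF assms(2)]
    using level_step.trans_prob_sum[of n l x] assms finite_lev by (simp add: level_step_def)
  finally show ?thesis .
qed

text \<open>The initial weight \<open>\<phi>\<close> makes the statement inductive: removing the first step of the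
  paths replaces \<open>\<phi>\<close> by its image under one step of the process.\<close>

lemma sum_path_weight_transition:
  assumes "i < k" "l + k \<le> 2 * n" "x \<in> lev n (l + i)"
  shows "(\<Sum>c\<in>level_paths n l k. \<phi> (c ! 0) * (if c ! i = x \<and> c ! Suc i = y then path_weight n l c else 0))
       = trans_prob n (l + i) x y * (\<Sum>c\<in>level_paths n l k. \<phi> (c ! 0) * (if c ! i = x then path_weight n l c else 0))"
  using assms
proof (induction i arbitrary: l k \<phi>)
  case 0
  then obtain k' where "k = Suc k'" by (cases k) auto
  then show ?case using sum_path_weight_first_step sum_path_weight_start 0 by simp
next
  case (Suc i)
  then obtain k' where k: "k = Suc k'" by (cases k) auto
  define \<psi> where "\<psi> w = (\<Sum>z\<in>lev n l. \<phi> z * trans_prob n l z w)" for w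
  have "(\<Sum>c\<in>level_paths n l k. \<phi> (c ! 0) * (if c ! Suc i = x \<and> c ! Suc (Suc i) = y then path_weight n l c else 0))
      = (\<Sum>z\<in>lev n l. \<Sum>q\<in>level_paths n (Suc l) k'. \<phi> z *
          (if q ! i = x \<and> q ! Suc i = y then trans_prob n l z (q ! 0) * path_weight n (Suc l) q else 0))"
    unfolding k sum_level_paths_Suc by (intro sum.cong refl) (auto simp: path_weight_Cons)
  also have "\<dots> = (\<Sum>q\<in>level_paths n (Suc l) k'. \<psi> (q ! 0) *
      (if q ! i = x \<and> q ! Suc i = y then path_weight n (Suc l) q else 0))"
    unfolding \<psi>_def by (rule sum_swap_weighted) (simp_all add: finite_lev finite_level_paths)
  also have "\<dots> = trans_prob n (Suc l + i) x y *
      (\<Sum>q\<in>level_paths n (Suc l) k'. \<psi> (q ! 0) * (if q ! i = x then path_weight n (Suc l) q else 0))"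
    using Suc.IH[of k' "Suc l" \<psi>] Suc.prems k by simp
  also have "(\<Sum>q\<in>level_paths n (Suc l) k'. \<psi> (q ! 0) * (if q ! i = x then path_weight n (Suc l) q else 0))
      = (\<Sum>z\<in>lev n l. \<Sum>q\<in>level_paths n (Suc l) k'. \<phi> z *
          (if q ! i = x then trans_prob n l z (q ! 0) * path_weight n (Suc l) q else 0))"
    unfolding \<psi>_def by (rule sum_swap_weighted[symmetric]) (simp_all add: finite_lev finite_level_paths)
  also have "\<dots> = (\<Sum>c\<in>level_paths n l k. \<phi> (c ! 0) * (if c ! Suc i = x then path_weight n l c else 0))"
    unfolding k sum_level_paths_Suc by (intro sum.cong refl) (auto simp: path_weight_Cons)
  finally show ?case by simp
qed

lemma mu_prob_eq_path_sum:
  "mu_prob n P = (\<Sum>c\<in>level_paths n 0 (2 * n). if P c then path_weight n 0 c else 0)"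
proof -
  have chains: "max_chains n \<subseteq> level_paths n 0 (2 * n)"
    unfolding max_chains_def level_paths_def by auto
  have "path_weight n 0 c = 0"
    if path: "c \<in> level_paths n 0 (2 * n)" and non_chain: "c \<notin> max_chains n" for c
  proof -
    have "length c = 2 * n + 1 \<and> (\<forall>j\<le>2 * n. c ! j \<in> lev n j)"
      using path unfolding level_paths_def by (auto simp: less_Suc_eq_le)
    then obtain j where "j < 2 * n" "\<not> c ! j < c ! Suc j"
      using non_chain unfolding max_chains_def by auto
    then have "trans_prob n j (c ! j) (c ! Suc j) = 0" unfolding trans_prob_def by simp
    then show ?thesis unfolding path_weight_def using path \<open>j < 2 * n\<close>
      by (auto simp: level_paths_def intro!: prod_zero)
  qed
  then have "(\<Sum>c\<in>{c \<in> max_chains n. P c}. path_weight n 0 c)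
      = (\<Sum>c\<in>{c \<in> level_paths n 0 (2 * n). P c}. path_weight n 0 c)"
    using chains by (intro sum.mono_neutral_left) (auto simp: finite_level_paths)
  moreover have "mu_chain n c = path_weight n 0 c" if "c \<in> max_chains n" for c
    using that unfolding max_chains_def mu_chain_def path_weight_def by simp
  ultimately show ?thesis
    unfolding mu_prob_def by (simp add: sum.inter_filter finite_level_paths)
qed

lemma mem_level_path_iff:
  assumes "c \<in> level_paths n 0 k" "x \<in> lev n i" "i \<le> k"
  shows "x \<in> set c \<longleftrightarrow> c ! i = x"
proof
  assume "x \<in> set c"
  then obtain j where "j < length c" "c ! j = x" by (auto simp: in_set_conv_nth)
  then have "x \<in> lev n j" using assms(1) unfolding level_paths_def by auto
  then show "c ! i = x" using lev_unique[OF assms(2)] \<open>c ! j = x\<close> by simp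
next
  assume "c ! i = x"
  then show "x \<in> set c" using assms(1,3) unfolding level_paths_def by auto
qed

lemma mu_prob_transition:
  assumes "i < 2 * n" "x \<in> lev n i" "y \<in> lev n (i + 1)"
  shows "mu_prob n (\<lambda>c. y \<in> set c \<and> x \<in> set c) = trans_prob n i x y * mu_prob n (\<lambda>c. x \<in> set c)"
proof -
  have "mu_prob n (\<lambda>c. y \<in> set c \<and> x \<in> set c)
      = (\<Sum>c\<in>level_paths n 0 (2 * n). 1 * (if c ! i = x \<and> c ! Suc i = y then path_weight n 0 c else 0))"
    unfolding mu_prob_eq_path_sum
    by (rule sum.cong) (use mem_level_path_iff assms in auto)
  also have "\<dots> = trans_prob n i x y * (\<Sum>c\<in>level_paths n 0 (2 * n). 1 * (if c ! i = x then path_weight n 0 c else 0))"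
    using sum_path_weight_transition[of i "2 * n" 0 n x "\<lambda>_. 1" y] assms by simp
  also have "(\<Sum>c\<in>level_paths n 0 (2 * n). 1 * (if c ! i = x then path_weight n 0 c else 0)) = mu_prob n (\<lambda>c. x \<in> set c)"
    unfolding mu_prob_eq_path_sum
    by (rule sum.cong) (use mem_level_path_iff assms in auto)
  finally show ?thesis .
qed

theorem mainTheorem12:
  fixes n i :: nat and x y :: "nat \<Rightarrow> nat"
  assumes "n \<ge> 5" and "i \<le> 2 * n - 1"
    and "x \<in> lev n i" and "y \<in> lev n (i + 1)" and "x < y"
  shows "mu_cond n y x \<le>
           (if i \<le> n - 1
            then 2 * real (card (lev n i)) / (real (i + 1) * real (card (lev n (i + 1))))
            else 2 / (2 * real n - real i))"
proof -
  have "i < 2 * n" using assms(1,2) by simp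
  interpret level_step n i by unfold_locales (fact \<open>i < 2 * n\<close>)
  have "mu_cond n y x = (if mu_prob n (\<lambda>c. x \<in> set c) = 0 then 0 else trans_prob n i x y)"
    unfolding mu_cond_def mu_prob_transition[OF \<open>i < 2 * n\<close> assms(3,4)] by simp
  moreover have "trans_prob n i x y \<le> transition_bound" using trans_prob_le assms(1,3) by simp
  moreover have "0 \<le> transition_bound"
    using transition_bound_nonneg[OF b_total_pos[OF assms(3)] \<open>i < 2 * n\<close>] .
  ultimately have "mu_cond n y x \<le> transition_bound" by simp
  then show ?thesis unfolding transition_bound_def totals_eq_card .
qed

end
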